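(* Let $R=(\mathbb{Z}_I,\oplus,\otimes)$ be an $I$-based ring and $S=(\mathbb{Z}_L,\oplus,\otimes)$ an $L$-based ring which is a based subring of $R$. Let $M=(\mathbb{Z}_J,\oplus,\otimes)$ be a based $R$-module with basis $J$. If $M$ is a torsion $R$-module, then the restriction $\mathrm{Res}^R_S(M)$ (i.e. $M$ viewed as an $S$-module) decomposes as a direct sum of torsion $S$-modules.
   Context: For a set $X$, $\mathbb{Z}_X$ is the free $\mathbb{Z}$-module with basis $X$. Let $(I,\mathbbm{1})$ be an involutive pointed set. A ring structure on $\mathbb{Z}_I$ is given by constants $N^i_{\alpha,i'}\ge0$ with $\alpha\otimes i'=\sum_iN^i_{\alpha,i'}i$; write $i\subset\alpha\otimes i'$ if $N^i_{\alpha,i'}\ne0$; it is $I$-based if $\overline{\alpha\otimes\alpha'}=\overline{\alpha'}\otimes\overline{\alpha}$ and $\mathbbm{1}\subset\overline{\alpha}\otimes\alpha'$ iff $\alpha=\alpha'$. A module structure on $\mathbb{Z}_J$ is given by constants $N^j_{\alpha,j'}\ge0$; it is $J$-based if $j\subset\alpha\otimes j'\iff j'\subset\overline{\alpha}\otimes j$; co-finite if $\{\alpha:j\subset\alpha\otimes j'\}$ is finite for all $j,j'$; connected if for all $j,j'$ some $\alpha$ has $j\subset\alpha\otimes j'$; torsion if co-finite and connected. $S$ is a based subring of $R$ if $L\subset I$ is closed under involution, contains $\mathbbm{1}$, and products of elements of $L$ only involve elements of $L$. *)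

theory Defs
  imports "HOL-Library.Disjoint_Sets"
begin

text \<open>A ring structure on the free Z-module with basis I (a carrier set), unit e,
  given by nonnegative structure constants: N a b i is the coefficient of i in a \<otimes> b.\<close>

definition ring_str :: "'i set \<Rightarrow> 'i \<Rightarrow> ('i \<Rightarrow> 'i \<Rightarrow> 'i \<Rightarrow> nat) \<Rightarrow> bool" where
  "ring_str I e N \<longleftrightarrow>
     e \<in> I \<and>
     (\<forall>a\<in>I. \<forall>b\<in>I. finite {i\<in>I. N a b i \<noteq> 0}) \<and>
     (\<forall>a\<in>I. \<forall>i\<in>I. N e a i = (if i = a then 1 else 0) \<and> N a e i = (if i = a then 1 else 0)) \<and>
     (\<forall>a\<in>I. \<forall>b\<in>I. \<forall>c\<in>I. \<forall>d\<in>I.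
        (\<Sum>i\<in>{i\<in>I. N a b i \<noteq> 0}. N a b i * N i c d)
      = (\<Sum>i\<in>{i\<in>I. N b c i \<noteq> 0}. N b c i * N a i d))"

definition based_ring :: "'i set \<Rightarrow> 'i \<Rightarrow> ('i \<Rightarrow> 'i) \<Rightarrow> ('i \<Rightarrow> 'i \<Rightarrow> 'i \<Rightarrow> nat) \<Rightarrow> bool" where
  "based_ring I e cj N \<longleftrightarrow>
     ring_str I e N \<and>
     (\<forall>a\<in>I. cj a \<in> I \<and> cj (cj a) = a) \<and> cj e = e \<and>
     (\<forall>a\<in>I. \<forall>b\<in>I. \<forall>i\<in>I. N a b i = N (cj b) (cj a) (cj i)) \<and>
     (\<forall>a\<in>I. \<forall>b\<in>I. N (cj a) b e \<noteq> 0 \<longleftrightarrow> a = b)"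

definition based_subring :: "'i set \<Rightarrow> 'i set \<Rightarrow> 'i \<Rightarrow> ('i \<Rightarrow> 'i) \<Rightarrow> ('i \<Rightarrow> 'i \<Rightarrow> 'i \<Rightarrow> nat) \<Rightarrow> bool" where
  "based_subring L I e cj N \<longleftrightarrow>
     L \<subseteq> I \<and> (\<forall>a\<in>L. cj a \<in> L) \<and> e \<in> L \<and>
     (\<forall>a\<in>L. \<forall>b\<in>L. \<forall>i\<in>I. N a b i \<noteq> 0 \<longrightarrow> i \<in> L)"

text \<open>Module structure on the free Z-module with basis J: M a j' j is the coefficient
  of j in a \<otimes> j'.\<close>

definition module_str :: "'i set \<Rightarrow> 'i \<Rightarrow> ('i \<Rightarrow> 'i \<Rightarrow> 'i \<Rightarrow> nat) \<Rightarrow> 'j set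
    \<Rightarrow> ('i \<Rightarrow> 'j \<Rightarrow> 'j \<Rightarrow> nat) \<Rightarrow> bool" where
  "module_str I e N J M \<longleftrightarrow>
     (\<forall>a\<in>I. \<forall>j\<in>J. finite {k\<in>J. M a j k \<noteq> 0}) \<and>
     (\<forall>j'\<in>J. \<forall>j\<in>J. M e j' j = (if j = j' then 1 else 0)) \<and>
     (\<forall>a\<in>I. \<forall>b\<in>I. \<forall>j'\<in>J. \<forall>j\<in>J.
        (\<Sum>i\<in>{i\<in>I. N a b i \<noteq> 0}. N a b i * M i j' j)
      = (\<Sum>k\<in>{k\<in>J. M b j' k \<noteq> 0}. M b j' k * M a k j))"

definition based_module :: "'i set \<Rightarrow> 'i \<Rightarrow> ('i \<Rightarrow> 'i) \<Rightarrow> ('i \<Rightarrow> 'i \<Rightarrow> 'i \<Rightarrow> nat) \<Rightarrow> 'j set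
    \<Rightarrow> ('i \<Rightarrow> 'j \<Rightarrow> 'j \<Rightarrow> nat) \<Rightarrow> bool" where
  "based_module I e cj N J M \<longleftrightarrow>
     module_str I e N J M \<and>
     (\<forall>a\<in>I. \<forall>j\<in>J. \<forall>j'\<in>J. M a j' j \<noteq> 0 \<longleftrightarrow> M (cj a) j j' \<noteq> 0)"

definition cofinite_module :: "'i set \<Rightarrow> 'j set \<Rightarrow> ('i \<Rightarrow> 'j \<Rightarrow> 'j \<Rightarrow> nat) \<Rightarrow> bool" where
  "cofinite_module I J M \<longleftrightarrow> (\<forall>j\<in>J. \<forall>j'\<in>J. finite {a\<in>I. M a j' j \<noteq> 0})"

definition connected_module :: "'i set \<Rightarrow> 'j set \<Rightarrow> ('i \<Rightarrow> 'j \<Rightarrow> 'j \<Rightarrow> nat) \<Rightarrow> bool" where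
  "connected_module I J M \<longleftrightarrow> (\<forall>j\<in>J. \<forall>j'\<in>J. \<exists>a\<in>I. M a j' j \<noteq> 0)"

definition torsion_module :: "'i set \<Rightarrow> 'j set \<Rightarrow> ('i \<Rightarrow> 'j \<Rightarrow> 'j \<Rightarrow> nat) \<Rightarrow> bool" where
  "torsion_module I J M \<longleftrightarrow> cofinite_module I J M \<and> connected_module I J M"

end

theory Submission
  imports Defs
begin

text \<open>Relate j' to j (orbit_rel) if j \<subseteq> a \<otimes> j' for some a \<in> L. This is reflexive by the unit,
  symmetric because M is J-based and L is closed under the involution, and transitive because
  z \<subseteq> b \<otimes> (a \<otimes> x) = (b \<otimes> a) \<otimes> x and b \<otimes> a only involves basis elements of L. The equivalence
  classes are S-stable, hence based S-modules; each is connected by construction and co-finite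
  because L \<subseteq> I.\<close>

lemma module_str_compose_coeff:
  assumes "module_str I e N J M" and "a \<in> I" "b \<in> I" and "x \<in> J" "y \<in> J" "z \<in> J"
    and "M a x y \<noteq> 0" "M b y z \<noteq> 0"
  shows "\<exists>i\<in>I. N b a i \<noteq> 0 \<and> M i x z \<noteq> 0"
proof -
  have fin: "finite {k\<in>J. M a x k \<noteq> 0}" and assoc:
    "(\<Sum>i\<in>{i\<in>I. N b a i \<noteq> 0}. N b a i * M i x z)
       = (\<Sum>k\<in>{k\<in>J. M a x k \<noteq> 0}. M a x k * M b k z)"
    using assms(1-6) unfolding module_str_def by blast+
  have "0 < M a x y * M b y z"
    using assms(7,8) by simp
  also have "\<dots> \<le> (\<Sum>k\<in>{k\<in>J. M a x k \<noteq> 0}. M a x k * M b k z)"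
    by (rule member_le_sum) (use assms(5,7) fin in auto)
  finally have "(\<Sum>i\<in>{i\<in>I. N b a i \<noteq> 0}. N b a i * M i x z) \<noteq> 0"
    using assoc by simp
  then obtain i where "i \<in> {i\<in>I. N b a i \<noteq> 0}" "N b a i * M i x z \<noteq> 0"
    by (meson sum.neutral)
  then show ?thesis
    by auto
qed

definition orbit_rel :: "'i set \<Rightarrow> 'j set \<Rightarrow> ('i \<Rightarrow> 'j \<Rightarrow> 'j \<Rightarrow> nat) \<Rightarrow> ('j \<times> 'j) set" where
  "orbit_rel L J M = {(x, y). x \<in> J \<and> y \<in> J \<and> (\<exists>a\<in>L. M a x y \<noteq> 0)}"

lemma equiv_orbit_rel:
  assumes sub: "based_subring L I e cj N" and Mod: "based_module I e cj N J M"
  shows "equiv J (orbit_rel L J M)"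
proof (rule equivI)
  have LI: "L \<subseteq> I" and Lcj: "\<forall>a\<in>L. cj a \<in> L" and eL: "e \<in> L"
    and Lcl: "\<forall>a\<in>L. \<forall>b\<in>L. \<forall>i\<in>I. N a b i \<noteq> 0 \<longrightarrow> i \<in> L"
    using sub unfolding based_subring_def by blast+
  have mod_str: "module_str I e N J M"
    and unit: "\<forall>j'\<in>J. \<forall>j\<in>J. M e j' j = (if j = j' then 1 else 0)"
    and bas: "\<forall>a\<in>I. \<forall>j\<in>J. \<forall>j'\<in>J. M a j' j \<noteq> 0 \<longleftrightarrow> M (cj a) j j' \<noteq> 0"
    using Mod unfolding based_module_def module_str_def by blast+
  show "orbit_rel L J M \<subseteq> J \<times> J"
    unfolding orbit_rel_def by auto
  show "refl_on J (orbit_rel L J M)"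
    unfolding refl_on_def orbit_rel_def using unit eL by force
  show "sym (orbit_rel L J M)"
    unfolding sym_def orbit_rel_def using bas Lcj LI by blast
  show "trans (orbit_rel L J M)"
  proof (rule transI)
    fix x y z
    assume "(x, y) \<in> orbit_rel L J M" "(y, z) \<in> orbit_rel L J M"
    then obtain a b where ab: "a \<in> L" "b \<in> L" "M a x y \<noteq> 0" "M b y z \<noteq> 0"
      and xyz: "x \<in> J" "y \<in> J" "z \<in> J"
      unfolding orbit_rel_def by blast
    then obtain i where "i \<in> I" "N b a i \<noteq> 0" "M i x z \<noteq> 0"
      using module_str_compose_coeff[OF mod_str] LI by blast
    with ab Lcl have "i \<in> L" "M i x z \<noteq> 0"
      by blast+
    with xyz show "(x, z) \<in> orbit_rel L J M"
      unfolding orbit_rel_def by blast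
  qed
qed

lemma orbit_class_stable:
  assumes eq: "equiv J (orbit_rel L J M)" and B: "B \<in> J // orbit_rel L J M"
  shows "\<forall>a\<in>L. \<forall>j'\<in>B. \<forall>j\<in>J. M a j' j \<noteq> 0 \<longrightarrow> j \<in> B"
proof (intro ballI impI)
  fix a j' j assume "a \<in> L" "j' \<in> B" "j \<in> J" "M a j' j \<noteq> 0"
  with in_quotient_imp_subset[OF eq B] have "(j', j) \<in> orbit_rel L J M"
    unfolding orbit_rel_def by blast
  with eq B \<open>j' \<in> B\<close> show "j \<in> B"
    by (rule in_quotient_imp_closed)
qed

lemma based_module_restrict:
  assumes sub: "based_subring L I e cj N" and Mod: "based_module I e cj N J M"
    and BJ: "B \<subseteq> J" and stable: "\<forall>a\<in>L. \<forall>j'\<in>B. \<forall>j\<in>J. M a j' j \<noteq> 0 \<longrightarrow> j \<in> B"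
  shows "based_module L e cj N B M"
proof -
  have LI: "L \<subseteq> I" and Lcl: "\<forall>a\<in>L. \<forall>b\<in>L. \<forall>i\<in>I. N a b i \<noteq> 0 \<longrightarrow> i \<in> L"
    using sub unfolding based_subring_def by blast+
  have fin: "\<forall>a\<in>I. \<forall>j\<in>J. finite {k\<in>J. M a j k \<noteq> 0}"
    and unit: "\<forall>j'\<in>J. \<forall>j\<in>J. M e j' j = (if j = j' then 1 else 0)"
    and assoc: "\<forall>a\<in>I. \<forall>b\<in>I. \<forall>j'\<in>J. \<forall>j\<in>J.
        (\<Sum>i\<in>{i\<in>I. N a b i \<noteq> 0}. N a b i * M i j' j)
      = (\<Sum>k\<in>{k\<in>J. M b j' k \<noteq> 0}. M b j' k * M a k j)"
    and bas: "\<forall>a\<in>I. \<forall>j\<in>J. \<forall>j'\<in>J. M a j' j \<noteq> 0 \<longleftrightarrow> M (cj a) j j' \<noteq> 0"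
    using Mod unfolding based_module_def module_str_def by blast+
  have supp_L: "{i\<in>L. N a b i \<noteq> 0} = {i\<in>I. N a b i \<noteq> 0}" if "a \<in> L" "b \<in> L" for a b
    using that Lcl LI by blast
  have supp_B: "{k\<in>B. M b j' k \<noteq> 0} = {k\<in>J. M b j' k \<noteq> 0}" if "b \<in> L" "j' \<in> B" for b j'
    using that stable BJ by blast
  show ?thesis
    unfolding based_module_def module_str_def
  proof (intro conjI ballI)
    fix a j assume "a \<in> L" "j \<in> B"
    then have "finite {k\<in>J. M a j k \<noteq> 0}"
      using fin LI BJ by blast
    then show "finite {k\<in>B. M a j k \<noteq> 0}"
      by (rule rev_finite_subset) (use BJ in blast)
  next
    fix j' j assume "j' \<in> B" "j \<in> B"
    then show "M e j' j = (if j = j' then 1 else 0)"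
      using unit BJ by blast
  next
    fix a b j' j assume h: "a \<in> L" "b \<in> L" "j' \<in> B" "j \<in> B"
    then have "(\<Sum>i\<in>{i\<in>I. N a b i \<noteq> 0}. N a b i * M i j' j)
        = (\<Sum>k\<in>{k\<in>J. M b j' k \<noteq> 0}. M b j' k * M a k j)"
      using assoc LI BJ by blast
    then show "(\<Sum>i\<in>{i\<in>L. N a b i \<noteq> 0}. N a b i * M i j' j)
        = (\<Sum>k\<in>{k\<in>B. M b j' k \<noteq> 0}. M b j' k * M a k j)"
      by (simp only: supp_L[OF h(1,2)] supp_B[OF h(2,3)])
  next
    fix a j j' assume "a \<in> L" "j \<in> B" "j' \<in> B"
    then show "M a j' j \<noteq> 0 \<longleftrightarrow> M (cj a) j j' \<noteq> 0"
      using bas LI BJ by blast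
  qed
qed

lemma cofinite_module_restrict:
  assumes "L \<subseteq> I" "B \<subseteq> J" "cofinite_module I J M"
  shows "cofinite_module L B M"
  unfolding cofinite_module_def
proof (intro ballI)
  fix j j' assume "j \<in> B" "j' \<in> B"
  then have "finite {a\<in>I. M a j' j \<noteq> 0}"
    using assms unfolding cofinite_module_def by blast
  then show "finite {a\<in>L. M a j' j \<noteq> 0}"
    by (rule rev_finite_subset) (use assms(1) in blast)
qed

lemma connected_module_orbit_class:
  assumes "equiv J (orbit_rel L J M)" "B \<in> J // orbit_rel L J M"
  shows "connected_module L B M"
  unfolding connected_module_def
proof (intro ballI)
  fix j j' assume "j \<in> B" "j' \<in> B"
  then have "(j', j) \<in> orbit_rel L J M"
    using in_quotient_imp_in_rel[OF assms] by blast
  then show "\<exists>a\<in>L. M a j' j \<noteq> 0"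
    unfolding orbit_rel_def by blast
qed

theorem lemma3p2:
  fixes I L :: "'i set" and e :: 'i and cj :: "'i \<Rightarrow> 'i"
    and N :: "'i \<Rightarrow> 'i \<Rightarrow> 'i \<Rightarrow> nat"
    and J :: "'j set" and M :: "'i \<Rightarrow> 'j \<Rightarrow> 'j \<Rightarrow> nat"
  assumes R: "based_ring I e cj N"
    and S: "based_ring L e cj N"
    and sub: "based_subring L I e cj N"
    and Mod: "based_module I e cj N J M"
    and tors: "torsion_module I J M"
  shows "\<exists>P. partition_on J P \<and>
           (\<forall>B\<in>P. (\<forall>a\<in>L. \<forall>j'\<in>B. \<forall>j\<in>J. M a j' j \<noteq> 0 \<longrightarrow> j \<in> B) \<and>
                   based_module L e cj N B M \<and> torsion_module L B M)"
proof -
  let ?r = "orbit_rel L J M"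
  have eq: "equiv J ?r"
    using sub Mod by (rule equiv_orbit_rel)
  have LI: "L \<subseteq> I"
    using sub unfolding based_subring_def by blast
  have "(\<forall>a\<in>L. \<forall>j'\<in>B. \<forall>j\<in>J. M a j' j \<noteq> 0 \<longrightarrow> j \<in> B) \<and>
        based_module L e cj N B M \<and> torsion_module L B M" if B: "B \<in> J // ?r" for B
  proof (intro conjI)
    have BJ: "B \<subseteq> J"
      using eq B by (rule in_quotient_imp_subset)
    have stable: "\<forall>a\<in>L. \<forall>j'\<in>B. \<forall>j\<in>J. M a j' j \<noteq> 0 \<longrightarrow> j \<in> B"
      using eq B by (rule orbit_class_stable)
    then show "\<forall>a\<in>L. \<forall>j'\<in>B. \<forall>j\<in>J. M a j' j \<noteq> 0 \<longrightarrow> j \<in> B" .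
    show "based_module L e cj N B M"
      using sub Mod BJ stable by (rule based_module_restrict)
    show "torsion_module L B M"
      using tors LI BJ cofinite_module_restrict connected_module_orbit_class[OF eq B]
      unfolding torsion_module_def by blast
  qed
  moreover have "partition_on J (J // ?r)"
    using eq by (rule partition_on_quotient)
  ultimately show ?thesis
    by blast
qed

end
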